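(* The unique solution $h$ of the system \[ h(\emptyset,J)=\delta_{\emptyset,J},\qquad h(I,J)=e^{2b_{\iota(I)}}\sum_{K\subset J}\Bigl(\prod_{i\in K}|\zeta_{i,\iota(I)}|\Bigr)h(I'\cup K,J\setminus K)\quad\text{if }I\ne\emptyset \] (for disjoint $I,J\subset\{1,\dots,n\}$, $I'=I\setminus\{\iota(I)\}$) is \[ h(I,J)=\Bigl(\prod_{i\in I\cup J}e^{2b_i}\Bigr)\sum_{G\in\mathcal{F}_I(J)}\prod_{\{i,j\}\in G}|\zeta_{ij}|. \]
   Context: $n\ge1$, $b_1,\dots,b_n\ge0$ real, $\zeta_{ij}=\zeta_{ji}$ complex for $1\le i,j\le n$. $\iota$ is a function assigning to each nonempty $I\subset\{1,\dots,n\}$ an element $\iota(I)\in I$. For disjoint $I,J$, $\mathcal{F}_I(J)$ denotes the set of forests on vertex set $I\cup J$ rooted in $I$, i.e. forests each of whose trees contains exactly one element of $I$ (a forest may have isolated vertices; $\mathcal{F}_\emptyset(\emptyset)$ consists of the empty graph and $\mathcal{F}_\emptyset(J)=\emptyset$ for $J\ne\emptyset$). Empty sums are $0$, empty products are $1$. *)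

theory Defs
  imports Complex_Main
begin

definition is_graph_on :: "nat set \<Rightarrow> nat set set \<Rightarrow> bool" where
  "is_graph_on V E \<longleftrightarrow> (\<forall>e\<in>E. \<exists>i j. i \<in> V \<and> j \<in> V \<and> i \<noteq> j \<and> e = {i, j})"

definition has_cycle :: "nat set set \<Rightarrow> bool" where
  "has_cycle E \<longleftrightarrow> (\<exists>vs. length vs \<ge> 3 \<and> distinct vs \<and>
      (\<forall>k < length vs. {vs ! k, vs ! ((k + 1) mod length vs)} \<in> E))"

definition is_forest_on :: "nat set \<Rightarrow> nat set set \<Rightarrow> bool" where
  "is_forest_on V E \<longleftrightarrow> is_graph_on V E \<and> \<not> has_cycle E"

text \<open>Connectedness (same connected component = same tree of the forest).\<close>
definition connected_in :: "nat set set \<Rightarrow> nat \<Rightarrow> nat \<Rightarrow> bool" where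
  "connected_in E u v \<longleftrightarrow> (u, v) \<in> {(x, y). {x, y} \<in> E}\<^sup>*"

text \<open>F_I(J): forests on I \<union> J each of whose trees contains exactly one element of I.\<close>
definition rooted_forests :: "nat set \<Rightarrow> nat set \<Rightarrow> nat set set set" where
  "rooted_forests I J = {E. is_forest_on (I \<union> J) E \<and>
      (\<forall>v \<in> I \<union> J. card {r \<in> I. connected_in E v r} = 1)}"

definition forest_weight :: "(nat \<Rightarrow> nat \<Rightarrow> complex) \<Rightarrow> nat set set \<Rightarrow> real" where
  "forest_weight \<zeta> G = (\<Prod>(i, j) \<in> {(i, j). i < j \<and> {i, j} \<in> G}. cmod (\<zeta> i j))"

definition solves_system ::
  "nat \<Rightarrow> (nat \<Rightarrow> real) \<Rightarrow> (nat \<Rightarrow> nat \<Rightarrow> complex) \<Rightarrow> (nat set \<Rightarrow> nat) \<Rightarrow>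
   (nat set \<Rightarrow> nat set \<Rightarrow> real) \<Rightarrow> bool" where
  "solves_system n b \<zeta> \<iota> h \<longleftrightarrow>
     (\<forall>I J. I \<subseteq> {1..n} \<and> J \<subseteq> {1..n} \<and> I \<inter> J = {} \<longrightarrow>
        (I = {} \<longrightarrow> h {} J = (if J = {} then 1 else 0)) \<and>
        (I \<noteq> {} \<longrightarrow> h I J = exp (2 * b (\<iota> I)) *
            (\<Sum>K\<in>Pow J. (\<Prod>i\<in>K. cmod (\<zeta> i (\<iota> I))) * h ((I - {\<iota> I}) \<union> K) (J - K))))"

end

theory Submission imports Defs begin

(* Fix a root r in I.  A forest F rooted in I on I \<union> J is determined by
   the set K = root_children r F of neighbours of r (necessarily K \<subseteq> J) together with
   the forest delete_root r F obtained by removing r; the latter is a forest on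
   (I - {r}) \<union> J rooted in (I - {r}) \<union> K, because every former child of r becomes the
   root of its own tree.  Conversely attaching the star of edges {r, k}, k \<in> K, to such a
   forest gives back a forest rooted in I.  This bijection (root_removal_bij) splits the
   weight as forest_weight F' times the product of |\<zeta> k r| over K, so the closed form
   satisfies the recursion of solves_system (closed_form_solves).  Uniqueness holds for any
   system of this shape, by induction on |I \<union> J|, since each recursive call removes the
   vertex \<iota> I (solutions_unique). *)

section \<open>Connectivity\<close>

lemma connected_refl: "connected_in E u u"
  by (simp add: connected_in_def)

lemma connected_edge: "{u, v} \<in> E \<Longrightarrow> connected_in E u v"
  by (auto simp: connected_in_def)

lemma connected_trans: "connected_in E u v \<Longrightarrow> connected_in E v w \<Longrightarrow> connected_in E u w"
  unfolding connected_in_def by (rule rtrancl_trans)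

lemma connected_step: "connected_in E u v \<Longrightarrow> {v, w} \<in> E \<Longrightarrow> connected_in E u w"
  unfolding connected_in_def by (auto intro: rtrancl_into_rtrancl)

lemma connected_sym: "connected_in E u v \<Longrightarrow> connected_in E v u"
  unfolding connected_in_def
proof (induction rule: rtrancl_induct)
  case base then show ?case by simp
next
  case (step y z)
  have "(z, y) \<in> {(x, y). {x, y} \<in> E}" using step(2) by (auto simp: insert_commute)
  then show ?case using step(3) by (rule converse_rtrancl_into_rtrancl)
qed

lemma connected_mono: "E \<subseteq> E' \<Longrightarrow> connected_in E u v \<Longrightarrow> connected_in E' u v"
  unfolding connected_in_def by (erule rtrancl_mono[THEN subsetD, rotated]) auto

lemma connected_isolated: assumes "\<forall>e\<in>E. r \<notin> e" "connected_in E u r" shows "u = r"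
  using assms(2) unfolding connected_in_def
  by (rule rtranclE) (use assms(1) in auto)

lemma connected_simple_path:
  assumes "connected_in E u w"
  shows "\<exists>p. p \<noteq> [] \<and> hd p = u \<and> last p = w \<and> distinct p \<and>
             (\<forall>k. Suc k < length p \<longrightarrow> {p!k, p!Suc k} \<in> E)"
  using assms unfolding connected_in_def
proof (induction rule: converse_rtrancl_induct)
  case base
  then show ?case by (intro exI[of _ "[w]"]) auto
next
  case (step u y)
  then obtain p where p: "p \<noteq> []" "hd p = y" "last p = w" "distinct p"
    "\<forall>k. Suc k < length p \<longrightarrow> {p!k, p!Suc k} \<in> E" by blast
  have uy: "{u, y} \<in> E" using step(1) by auto
  show ?case
  proof (cases "u \<in> set p")
    case True
    then obtain i where i: "i < length p" "p ! i = u" by (auto simp: in_set_conv_nth)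
    have "\<forall>k. Suc k < length (drop i p) \<longrightarrow> {drop i p ! k, drop i p ! Suc k} \<in> E"
      using p(5) i by (auto simp: add.commute)
    then show ?thesis
      using i p by (intro exI[of _ "drop i p"]) (simp add: hd_drop_conv_nth)
  next
    case False
    have "\<forall>k. Suc k < length (u # p) \<longrightarrow> {(u # p) ! k, (u # p) ! Suc k} \<in> E"
    proof (intro allI impI)
      fix k assume "Suc k < length (u # p)"
      then show "{(u # p) ! k, (u # p) ! Suc k} \<in> E"
        using p uy by (cases k) (auto simp: hd_conv_nth)
    qed
    then show ?thesis using p False by (intro exI[of _ "u # p"]) auto
  qed
qed

lemma connected_along_list:
  assumes "\<forall>k. i \<le> k \<and> k < j \<longrightarrow> {p!k, p!Suc k} \<in> E" "i \<le> j"
  shows "connected_in E (p!i) (p!j)"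
  using assms
proof (induction j)
  case 0 then show ?case by (simp add: connected_refl)
next
  case (Suc j)
  show ?case
  proof (cases "i = Suc j")
    case True then show ?thesis by (simp add: connected_refl)
  next
    case False
    then have "i \<le> j" using Suc by auto
    then have "connected_in E (p!i) (p!j)" using Suc by auto
    then show ?thesis using Suc(2) \<open>i \<le> j\<close> by (auto intro: connected_step)
  qed
qed

abbreviation star_edges :: "nat \<Rightarrow> nat set \<Rightarrow> nat set set" where
  "star_edges r K \<equiv> (\<lambda>k. {r, k}) ` K"

lemma connected_with_star:
  assumes avoid: "\<forall>e\<in>F'. r \<notin> e"
    and c: "connected_in (F' \<union> star_edges r K) u w"
  shows "connected_in F' u w \<or>
         ((u = r \<or> (\<exists>k\<in>K. connected_in F' u k)) \<and> (w = r \<or> (\<exists>k\<in>K. connected_in F' w k)))"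
  using c unfolding connected_in_def[of "F' \<union> _"]
proof (induction rule: rtrancl_induct)
  case base then show ?case by (simp add: connected_refl)
next
  case (step y z)
  show ?case
  proof (cases "{y, z} \<in> F'")
    case True
    have zy: "connected_in F' z y" using True by (intro connected_edge) (simp add: insert_commute)
    have "y \<noteq> r" using True avoid by auto
    with step(3) True zy show ?thesis
      by (meson connected_step connected_trans)
  next
    case False
    then obtain k where k: "k \<in> K" "{y, z} = {r, k}" using step(2) by auto
    have ry: "y = r \<or> y = k" and rz: "z = r \<or> z = k" using k(2) by (auto simp: doubleton_eq_iff)
    have "u = r \<or> (\<exists>k\<in>K. connected_in F' u k)"
      using step(3)
    proof
      assume "connected_in F' u y"
      then show ?thesis using ry k(1) connected_isolated[OF avoid] by auto
    qed auto
    then show ?thesis using rz k(1) connected_refl by blast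
  qed
qed

section \<open>Cycles\<close>

definition is_cycle :: "nat set set \<Rightarrow> nat list \<Rightarrow> bool" where
  "is_cycle E vs \<longleftrightarrow> length vs \<ge> 3 \<and> distinct vs \<and>
      (\<forall>k < length vs. {vs ! k, vs ! ((k + 1) mod length vs)} \<in> E)"

lemma has_cycle_iff: "has_cycle E \<longleftrightarrow> (\<exists>vs. is_cycle E vs)"
  unfolding has_cycle_def is_cycle_def by simp

lemma is_cycle_mono: "is_cycle E vs \<Longrightarrow> E \<subseteq> E' \<Longrightarrow> is_cycle E' vs"
  unfolding is_cycle_def by (meson subsetD)

lemma is_cycle_rotate:
  assumes "is_cycle E vs" shows "is_cycle E (rotate p vs)"
proof -
  let ?L = "length vs"
  have L: "?L \<ge> 3" "distinct vs"
    and e: "\<And>k. k < ?L \<Longrightarrow> {vs ! k, vs ! ((k + 1) mod ?L)} \<in> E"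
    using assms unfolding is_cycle_def by auto
  have "{rotate p vs ! k, rotate p vs ! ((k + 1) mod ?L)} \<in> E" if k: "k < ?L" for k
  proof -
    have m: "(k + 1) mod ?L < ?L" using L by (intro mod_less_divisor) auto
    have 1: "rotate p vs ! k = vs ! ((p + k) mod ?L)" using k by (simp add: nth_rotate)
    have 2: "rotate p vs ! ((k + 1) mod ?L) = vs ! (((p + k) mod ?L + 1) mod ?L)"
      using m by (simp add: nth_rotate mod_add_right_eq mod_add_left_eq add.assoc mod_Suc_eq)
    have "(p + k) mod ?L < ?L" using L by (intro mod_less_divisor) auto
    then show ?thesis unfolding 1 2 by (rule e)
  qed
  then show ?thesis using L unfolding is_cycle_def by simp
qed

text \<open>On a path with at least one edge every vertex lies on an edge, so a vertex lying on
  no edge is not on the path.\<close>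
lemma path_avoids_isolated:
  assumes avoid: "\<forall>e\<in>E. r \<notin> e" and len: "length p \<ge> 2"
    and edges: "\<forall>k. Suc k < length p \<longrightarrow> {p!k, p!Suc k} \<in> E"
  shows "r \<notin> set p"
proof
  assume "r \<in> set p"
  then obtain k where k: "k < length p" "p ! k = r" by (auto simp: in_set_conv_nth)
  show False
  proof (cases "Suc k < length p")
    case True
    then show ?thesis using edges avoid k by force
  next
    case False
    then have "Suc (k - 1) < length p" "Suc (k - 1) = k" using k len by auto
    then show ?thesis using edges[rule_format, of "k - 1"] avoid k by force
  qed
qed

lemma cycle_through_vertex:
  assumes avoid: "\<forall>e\<in>F'. r \<notin> e" and sub: "F' \<subseteq> F"
    and p: "p \<noteq> []" "hd p = a" "last p = a'" "distinct p"
           "\<forall>k. Suc k < length p \<longrightarrow> {p!k, p!Suc k} \<in> F'"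
    and aa: "a \<noteq> a'" "{r, a} \<in> F" "{r, a'} \<in> F"
  shows "has_cycle F"
proof -
  have lp: "length p \<ge> 2"
  proof (rule ccontr)
    assume "\<not> 2 \<le> length p"
    moreover have "length p \<noteq> 0" using p(1) by simp
    ultimately have "length p = 1" by linarith
    then have "hd p = last p" by (cases p) auto
    then show False using p aa by simp
  qed
  have "is_cycle F (r # p)"
    unfolding is_cycle_def
  proof (intro conjI allI impI)
    show "3 \<le> length (r # p)" using lp by simp
    show "distinct (r # p)" using path_avoids_isolated[OF avoid lp p(5)] p(4) by simp
    fix k assume k: "k < length (r # p)"
    show "{(r # p) ! k, (r # p) ! ((k + 1) mod length (r # p))} \<in> F"
    proof (cases "k = 0")
      case True
      then show ?thesis using lp aa p(1,2) by (simp add: hd_conv_nth)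
    next
      case k0: False
      show ?thesis
      proof (cases "k = length p")
        case True
        then have "(r # p) ! k = last p" using p(1) k0 by (simp add: last_conv_nth)
        moreover have "(k + 1) mod length (r # p) = 0" using True by simp
        ultimately show ?thesis using aa p(3) by (simp add: insert_commute)
      next
        case False
        then have k1: "Suc (k - 1) < length p" "(k + 1) mod length (r # p) = k + 1"
          using k k0 by auto
        then have "{p!(k-1), p!Suc (k-1)} \<in> F'" using p(5) by blast
        then show ?thesis using k1 k0 sub by (cases k) auto
      qed
    qed
  qed
  then show ?thesis by (auto simp: has_cycle_iff)
qed

lemma cycle_avoiding_star_center:
  assumes vs: "is_cycle (F' \<union> star_edges r K) vs" and r: "r \<notin> set vs"
  shows "is_cycle F' vs"
  unfolding is_cycle_def
proof (intro conjI allI impI)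
  show "3 \<le> length vs" "distinct vs" using vs by (auto simp: is_cycle_def)
  fix k assume k: "k < length vs"
  have m: "(k + 1) mod length vs < length vs" using k by (intro mod_less_divisor) auto
  have "{vs ! k, vs ! ((k + 1) mod length vs)} \<in> F' \<union> star_edges r K"
    using vs k by (auto simp: is_cycle_def)
  moreover have "vs ! k \<noteq> r" "vs ! ((k + 1) mod length vs) \<noteq> r"
    using r k m nth_mem by metis+
  ultimately show "{vs ! k, vs ! ((k + 1) mod length vs)} \<in> F'"
    by (auto simp: doubleton_eq_iff)
qed

text \<open>A cycle starting at the star center r leaves r towards some k \<in> K, returns from another
  k' \<in> K, and joins k to k' in F' in between.\<close>
lemma cycle_from_star_center:
  assumes ws: "is_cycle (F' \<union> star_edges r K) ws" and w0: "ws ! 0 = r"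
    and avoid: "\<forall>e\<in>F'. r \<notin> e"
  shows "\<exists>a\<in>K. \<exists>a'\<in>K. a \<noteq> a' \<and> connected_in F' a a'"
proof -
  let ?F = "F' \<union> star_edges r K"
  define L where "L = length ws"
  have L: "L \<ge> 3" "distinct ws" and e: "\<And>k. k < L \<Longrightarrow> {ws ! k, ws ! ((k + 1) mod L)} \<in> ?F"
    using ws unfolding is_cycle_def L_def by auto
  have not_r: "ws ! i \<noteq> r" if "0 < i" "i < L" for i
    using L(2) that w0 nth_eq_iff_index_eq[of ws i 0] L_def by fastforce
  have in_K: "ws ! i \<in> K" if i: "0 < i" "i < L" "{r, ws ! i} \<in> ?F" for i
  proof -
    have "{r, ws ! i} \<notin> F'" using avoid by auto
    then obtain k where "k \<in> K" "{r, ws ! i} = {r, k}" using i(3) by auto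
    then show ?thesis using not_r[OF i(1,2)] by (auto simp: doubleton_eq_iff)
  qed
  have first: "ws ! 1 \<in> K" using in_K[of 1] e[of 0] w0 L by auto
  have last: "ws ! (L - 1) \<in> K"
  proof -
    have "(L - 1 + 1) mod L = 0" using L by simp
    then have "{ws ! (L - 1), ws ! 0} \<in> ?F" using e[of "L - 1"] L by auto
    then show ?thesis using in_K[of "L - 1"] w0 L by (auto simp: insert_commute)
  qed
  have ne: "ws ! 1 \<noteq> ws ! (L - 1)" using L nth_eq_iff_index_eq[of ws 1 "L - 1"] L_def by auto
  have "\<forall>k. 1 \<le> k \<and> k < L - 1 \<longrightarrow> {ws!k, ws!Suc k} \<in> F'"
  proof (intro allI impI)
    fix k assume k: "1 \<le> k \<and> k < L - 1"
    then have "Suc k < L" by linarith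
    then have "{ws!k, ws!Suc k} \<in> ?F" using e[of k] k by auto
    moreover have "ws!k \<noteq> r" "ws ! Suc k \<noteq> r" using not_r[of k] not_r[of "Suc k"] k \<open>Suc k < L\<close>
      by auto
    ultimately show "{ws!k, ws!Suc k} \<in> F'" by (auto simp: doubleton_eq_iff)
  qed
  then have "connected_in F' (ws!1) (ws!(L-1))" using L by (intro connected_along_list) auto
  then show ?thesis using first last ne by blast
qed

lemma cycle_after_attaching_star:
  assumes cyc: "has_cycle (F' \<union> star_edges r K)" and avoid: "\<forall>e\<in>F'. r \<notin> e"
    and acyclic: "\<not> has_cycle F'"
  shows "\<exists>a\<in>K. \<exists>a'\<in>K. a \<noteq> a' \<and> connected_in F' a a'"
proof -
  obtain vs where vs: "is_cycle (F' \<union> star_edges r K) vs" using cyc by (auto simp: has_cycle_iff)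
  show ?thesis
  proof (cases "r \<in> set vs")
    case False
    then show ?thesis
      using cycle_avoiding_star_center[OF vs] acyclic by (auto simp: has_cycle_iff)
  next
    case True
    then obtain p where p: "p < length vs" "vs ! p = r" by (auto simp: in_set_conv_nth)
    have "rotate p vs ! 0 = r" using p by (subst nth_rotate) auto
    then show ?thesis using cycle_from_star_center[OF is_cycle_rotate[OF vs]] avoid by blast
  qed
qed

section \<open>Rooted forests\<close>

lemma rooted_forests_iff: "F \<in> rooted_forests I J \<longleftrightarrow> is_graph_on (I \<union> J) F \<and> \<not> has_cycle F \<and>
   (\<forall>v\<in>I \<union> J. card {x\<in>I. connected_in F v x} = 1)"
  by (simp add: rooted_forests_def is_forest_on_def)

lemma graph_edge_vertices: "is_graph_on V E \<Longrightarrow> e \<in> E \<Longrightarrow> e \<subseteq> V"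
  unfolding is_graph_on_def by force

lemma graph_mono: "is_graph_on V E \<Longrightarrow> V \<subseteq> W \<Longrightarrow> is_graph_on W E"
  unfolding is_graph_on_def by (meson subsetD)

lemma graph_union: "is_graph_on V E \<Longrightarrow> is_graph_on V E' \<Longrightarrow> is_graph_on V (E \<union> E')"
  unfolding is_graph_on_def by (simp only: ball_Un)

lemma unique_root_eq:
  assumes "card {x\<in>I. connected_in E v x} = 1" "a \<in> I" "b \<in> I"
    "connected_in E v a" "connected_in E v b"
  shows "a = b"
proof -
  obtain x where x: "{x\<in>I. connected_in E v x} = {x}"
    using assms(1) by (auto simp: card_1_singleton_iff)
  have "a \<in> {x\<in>I. connected_in E v x}" "b \<in> {x\<in>I. connected_in E v x}" using assms by auto
  then show ?thesis unfolding x by simp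
qed

lemma unique_root_exists:
  assumes "card {x\<in>I. connected_in E v x} = 1"
  shows "\<exists>a\<in>I. connected_in E v a"
  using assms by (auto simp: card_1_singleton_iff)

lemma unique_root_intro:
  assumes "a \<in> I" "connected_in E v a" "\<And>x. x \<in> I \<Longrightarrow> connected_in E v x \<Longrightarrow> x = a"
  shows "card {x\<in>I. connected_in E v x} = 1"
proof -
  have "{x\<in>I. connected_in E v x} = {a}" using assms by blast
  then show ?thesis by simp
qed

lemma roots_not_connected:
  assumes "F \<in> rooted_forests I J" "u \<in> I" "y \<in> I" "connected_in F u y"
  shows "u = y"
  using assms unique_root_eq[of I F u u y] connected_refl by (auto simp: rooted_forests_iff)

lemma rooted_forests_finite:
  assumes "finite (I \<union> J)" shows "finite (rooted_forests I J)"
proof (rule finite_subset)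
  show "rooted_forests I J \<subseteq> Pow (Pow (I \<union> J))"
    using graph_edge_vertices by (fastforce simp: rooted_forests_iff)
  show "finite (Pow (Pow (I \<union> J)))" using assms by simp
qed

lemma rooted_forests_no_roots: "rooted_forests {} J = (if J = {} then {{}} else {})"
proof (cases "J = {}")
  case True
  have "\<not> has_cycle {}" unfolding has_cycle_def by force
  then have "F \<in> rooted_forests {} {} \<longleftrightarrow> F = {}" for F
    by (auto simp: rooted_forests_iff is_graph_on_def)
  then show ?thesis using True by auto
next
  case False
  then show ?thesis by (auto simp: rooted_forests_iff)
qed

section \<open>Removing a root\<close>

definition root_children :: "nat \<Rightarrow> nat set set \<Rightarrow> nat set" where
  "root_children r F = {k. {r, k} \<in> F}"

definition delete_root :: "nat \<Rightarrow> nat set set \<Rightarrow> nat set set" where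
  "delete_root r F = {e\<in>F. r \<notin> e}"

lemma root_children_attach:
  assumes "\<forall>e\<in>F'. r \<notin> e" "r \<notin> K"
  shows "root_children r (F' \<union> star_edges r K) = K"
  using assms by (auto simp: root_children_def doubleton_eq_iff)

lemma delete_root_attach:
  assumes "\<forall>e\<in>F'. r \<notin> e"
  shows "delete_root r (F' \<union> star_edges r K) = F'"
  using assms by (auto simp: delete_root_def)

text \<open>Attaching the root r to the roots K \<subseteq> J of a forest on (I - {r}) \<union> J gives a forest
  rooted in I.\<close>
locale root_attachment =
  fixes I J :: "nat set" and r :: nat and K :: "nat set" and F' :: "nat set set"
  assumes disjoint: "I \<inter> J = {}" and root: "r \<in> I" and children: "K \<subseteq> J"
    and smaller_forest: "F' \<in> rooted_forests (I - {r} \<union> K) (J - K)"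
begin

abbreviation F where "F \<equiv> F' \<union> star_edges r K"

lemma r_notin_J: "r \<notin> J"
  using disjoint root by auto

lemma avoids_root: "\<forall>e\<in>F'. r \<notin> e"
proof
  fix e assume "e \<in> F'"
  then have "e \<subseteq> (I - {r} \<union> K) \<union> (J - K)"
    using smaller_forest graph_edge_vertices by (auto simp: rooted_forests_iff)
  then show "r \<notin> e" using children r_notin_J by auto
qed

lemma smaller_roots_separate:
  "u \<in> I - {r} \<union> K \<Longrightarrow> y \<in> I - {r} \<union> K \<Longrightarrow> connected_in F' u y \<Longrightarrow> u = y"
  using roots_not_connected[OF smaller_forest] .

lemma attached_graph: "is_graph_on (I \<union> J) F"
proof (rule graph_union)
  have "is_graph_on ((I - {r} \<union> K) \<union> (J - K)) F'"
    using smaller_forest by (simp add: rooted_forests_iff)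
  then show "is_graph_on (I \<union> J) F'" by (rule graph_mono) (use children in auto)
  show "is_graph_on (I \<union> J) (star_edges r K)"
    unfolding is_graph_on_def
  proof
    fix e assume "e \<in> star_edges r K"
    then obtain k where k: "k \<in> K" "e = {r, k}" by auto
    then have "r \<in> I \<union> J" "k \<in> I \<union> J" "r \<noteq> k" using root children r_notin_J by auto
    then show "\<exists>i j. i \<in> I \<union> J \<and> j \<in> I \<union> J \<and> i \<noteq> j \<and> e = {i, j}" using k(2) by blast
  qed
qed

lemma attached_acyclic: "\<not> has_cycle F"
proof
  assume "has_cycle F"
  moreover have "\<not> has_cycle F'" using smaller_forest by (simp add: rooted_forests_iff)
  ultimately obtain a a' where "a \<in> K" "a' \<in> K" "a \<noteq> a'" "connected_in F' a a'"
    using cycle_after_attaching_star avoids_root by blast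
  then show False using smaller_roots_separate by blast
qed

lemma connected_to_new_root: "connected_in F v r \<longleftrightarrow> v = r \<or> (\<exists>k\<in>K. connected_in F' v k)"
proof
  assume "connected_in F v r"
  then show "v = r \<or> (\<exists>k\<in>K. connected_in F' v k)"
    using connected_with_star[OF avoids_root] connected_isolated[OF avoids_root] by blast
next
  assume "v = r \<or> (\<exists>k\<in>K. connected_in F' v k)"
  then show "connected_in F v r"
  proof
    assume "v = r" then show ?thesis by (simp add: connected_refl)
  next
    assume "\<exists>k\<in>K. connected_in F' v k"
    then obtain k where k: "k \<in> K" "connected_in F' v k" by blast
    have "connected_in F v k" using k(2) by (rule connected_mono[rotated]) auto
    moreover have "{k, r} \<in> F" using k(1) by (auto simp: insert_commute)
    ultimately show ?thesis by (rule connected_step)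
  qed
qed

lemma connected_to_old_root:
  assumes x: "x \<in> I - {r}"
  shows "connected_in F v x \<longleftrightarrow> connected_in F' v x"
proof
  assume "connected_in F v x"
  moreover have "\<not> connected_in F' x k" if "k \<in> K" for k
    using that x smaller_roots_separate[of x k] children disjoint by auto
  ultimately show "connected_in F' v x"
    using connected_with_star[OF avoids_root] x by blast
qed (auto intro: connected_mono)

lemma only_root_in_tree_of_root:
  assumes x: "x \<in> I" "connected_in F r x"
  shows "x = r"
proof (rule ccontr)
  assume "x \<noteq> r"
  then have "connected_in F' r x" using x connected_to_old_root by simp
  then show False using connected_isolated[OF avoids_root connected_sym] \<open>x \<noteq> r\<close> by blast
qed

text \<open>A vertex other than r has its old root a; its new root is r if a was a child of r, and
  a otherwise.\<close>
lemma attached_roots_other_vertex: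
  assumes v: "v \<in> (I - {r} \<union> K) \<union> (J - K)"
  shows "card {x\<in>I. connected_in F v x} = 1"
proof -
  have "v \<noteq> r" using v r_notin_J children by auto
  have v_root: "card {x \<in> I - {r} \<union> K. connected_in F' v x} = 1"
    using smaller_forest v by (auto simp: rooted_forests_iff)
  then obtain a where a: "a \<in> I - {r} \<union> K" "connected_in F' v a" using unique_root_exists by blast
  have old_root: "y = a" if "y \<in> I - {r} \<union> K" "connected_in F' v y" for y
    using unique_root_eq[OF v_root that(1) a(1) that(2) a(2)] .
  have a_child: "a \<in> K \<longleftrightarrow> a \<notin> I" using a(1) children disjoint by auto
  show ?thesis
  proof (cases "a \<in> K")
    case True
    show ?thesis
    proof (rule unique_root_intro[OF root])
      show "connected_in F v r" using connected_to_new_root True a(2) by blast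
      fix x assume x: "x \<in> I" "connected_in F v x"
      show "x = r"
      proof (rule ccontr)
        assume "x \<noteq> r"
        then have "connected_in F' v x" using x connected_to_old_root by simp
        then have "x = a" using old_root x \<open>x \<noteq> r\<close> by simp
        then show False using True x a_child by simp
      qed
    qed
  next
    case a_not_child: False
    then have a_old: "a \<in> I - {r}" using a(1) by simp
    show ?thesis
    proof (rule unique_root_intro)
      show "a \<in> I" using a_old by simp
      show "connected_in F v a" using connected_to_old_root[OF a_old] a(2) by simp
      fix x assume x: "x \<in> I" "connected_in F v x"
      show "x = a"
      proof (cases "x = r")
        case True
        then obtain k where "k \<in> K" "connected_in F' v k"
          using x(2) connected_to_new_root \<open>v \<noteq> r\<close> by auto
        then have "k = a" using old_root by simp
        then show ?thesis using a_not_child \<open>k \<in> K\<close> by simp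
      next
        case False
        then show ?thesis using x connected_to_old_root old_root by simp
      qed
    qed
  qed
qed

lemma attached_roots:
  assumes v: "v \<in> I \<union> J"
  shows "card {x\<in>I. connected_in F v x} = 1"
proof (cases "v = r")
  case True
  then show ?thesis
    using unique_root_intro[OF root] connected_refl only_root_in_tree_of_root by blast
next
  case False
  then show ?thesis using v attached_roots_other_vertex by blast
qed

theorem attached_rooted_forest: "F \<in> rooted_forests I J"
  using attached_graph attached_acyclic attached_roots by (simp add: rooted_forests_iff)

end

text \<open>Deleting the root r from a forest rooted in I leaves a forest on (I \<union> J) - {r} whose
  roots are I - {r} together with the former children of r.\<close>
locale root_detachment =
  fixes I J :: "nat set" and r :: nat and F :: "nat set set"
  assumes disjoint: "I \<inter> J = {}" and root: "r \<in> I" and forest: "F \<in> rooted_forests I J"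
begin

abbreviation K where "K \<equiv> root_children r F"
abbreviation F' where "F' \<equiv> delete_root r F"

lemma graph: "is_graph_on (I \<union> J) F"
  using forest by (simp add: rooted_forests_iff)

lemma avoids_root: "\<forall>e\<in>F'. r \<notin> e"
  by (simp add: delete_root_def)

lemma F'_subset: "F' \<subseteq> F"
  by (auto simp: delete_root_def)

lemma children_in_J: "K \<subseteq> J"
proof
  fix k assume "k \<in> K"
  then have e: "{r, k} \<in> F" by (simp add: root_children_def)
  then obtain i j where "i \<in> I \<union> J" "j \<in> I \<union> J" "i \<noteq> j" "{r, k} = {i, j}"
    using graph unfolding is_graph_on_def by meson
  then have "k \<in> I \<union> J" "r \<noteq> k" by (auto simp: doubleton_eq_iff)
  moreover have "k \<notin> I" using roots_not_connected[OF forest root _ connected_edge[OF e]] \<open>r \<noteq> k\<close>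
    by auto
  ultimately show "k \<in> J" by simp
qed

lemma decomposition: "F = F' \<union> star_edges r K"
proof
  show "F' \<union> star_edges r K \<subseteq> F" by (auto simp: delete_root_def root_children_def)
  show "F \<subseteq> F' \<union> star_edges r K"
  proof
    fix e assume e: "e \<in> F"
    show "e \<in> F' \<union> star_edges r K"
    proof (cases "r \<in> e")
      case False then show ?thesis using e by (simp add: delete_root_def)
    next
      case True
      obtain i j where "e = {i, j}" using graph e unfolding is_graph_on_def by meson
      then have "e = {r, j} \<or> e = {r, i}" using True by auto
      then show ?thesis using e by (auto simp: root_children_def)
    qed
  qed
qed

lemma remaining_vertices: "(I - {r} \<union> K) \<union> (J - K) = (I \<union> J) - {r}"
  using children_in_J disjoint root by auto

lemma detached_graph: "is_graph_on ((I - {r} \<union> K) \<union> (J - K)) F'"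
  unfolding is_graph_on_def remaining_vertices
proof
  fix e assume e: "e \<in> F'"
  then have "e \<in> F" using F'_subset by blast
  then obtain i j where ij: "i \<in> I \<union> J" "j \<in> I \<union> J" "i \<noteq> j" "e = {i, j}"
    using graph unfolding is_graph_on_def by blast
  moreover have "r \<notin> e" using e avoids_root by blast
  ultimately show "\<exists>i j. i \<in> I \<union> J - {r} \<and> j \<in> I \<union> J - {r} \<and> i \<noteq> j \<and> e = {i, j}"
    by blast
qed

lemma detached_acyclic: "\<not> has_cycle F'"
  using forest is_cycle_mono[OF _ F'_subset] by (auto simp: has_cycle_iff rooted_forests_iff)

text \<open>An old root is not joined to any other new root, since a child of r lies in the tree of r.\<close>
lemma old_root_separate:
  assumes "x \<in> I - {r}" "y \<in> I - {r} \<union> K" "connected_in F' x y"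
  shows "x = y"
proof (cases "y \<in> K")
  case False
  then have "y \<in> I" using assms(2) by blast
  then show ?thesis
    using roots_not_connected[OF forest _ _ connected_mono[OF F'_subset assms(3)]] assms(1) by blast
next
  case True
  then have "{y, r} \<in> F" by (simp add: root_children_def insert_commute)
  then have "connected_in F x r" by (rule connected_step[OF connected_mono[OF F'_subset assms(3)]])
  then have "x = r" using roots_not_connected[OF forest _ root] assms(1) by blast
  then show ?thesis using assms(1) by blast
qed

text \<open>Two children of r are not joined in F', since that would close a cycle through r.\<close>
lemma children_separate:
  assumes "a \<in> K" "y \<in> K" "connected_in F' a y"
  shows "a = y"
proof (rule ccontr)
  assume "a \<noteq> y"
  moreover obtain p where "p \<noteq> []" "hd p = a" "last p = y" "distinct p"
    "\<forall>k. Suc k < length p \<longrightarrow> {p!k, p!Suc k} \<in> F'"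
    using connected_simple_path[OF assms(3)] by blast
  ultimately have "has_cycle F"
    using cycle_through_vertex[OF avoids_root F'_subset] assms(1,2)
    by (auto simp: root_children_def)
  then show False using forest by (simp add: rooted_forests_iff)
qed

lemma new_roots_separate:
  assumes "a \<in> I - {r} \<union> K" "y \<in> I - {r} \<union> K" "connected_in F' a y"
  shows "a = y"
proof (cases "a \<in> I - {r}")
  case True
  show ?thesis by (rule old_root_separate[OF True assms(2,3)])
next
  case a_child: False
  show ?thesis
  proof (cases "y \<in> I - {r}")
    case True
    then show ?thesis using old_root_separate[OF True assms(1) connected_sym[OF assms(3)]] by simp
  next
    case False
    then show ?thesis using a_child assms children_separate[of a y] by blast
  qed
qed

lemma detached_roots:
  assumes v: "v \<in> (I - {r} \<union> K) \<union> (J - K)"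
  shows "card {x \<in> I - {r} \<union> K. connected_in F' v x} = 1"
proof -
  have vr: "v \<noteq> r" and "v \<in> I \<union> J" using v remaining_vertices by auto
  then have "card {x\<in>I. connected_in F v x} = 1" using forest by (simp add: rooted_forests_iff)
  then obtain i where i: "i \<in> I" "connected_in F v i" using unique_root_exists by blast
  have "connected_in (F' \<union> star_edges r K) v i"
    by (subst decomposition[symmetric]) (rule i(2))
  then have "\<exists>a\<in>I - {r} \<union> K. connected_in F' v a"
  proof (rule connected_with_star[OF avoids_root, THEN disjE])
    assume c: "connected_in F' v i"
    then have "i \<noteq> r" using connected_isolated[OF avoids_root] vr by blast
    then show ?thesis using c i(1) by blast
  next
    assume "(v = r \<or> (\<exists>k\<in>K. connected_in F' v k)) \<and> (i = r \<or> (\<exists>k\<in>K. connected_in F' i k))"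
    then show ?thesis using vr by blast
  qed
  then obtain a where a: "a \<in> I - {r} \<union> K" "connected_in F' v a" by blast
  show ?thesis
  proof (rule unique_root_intro[OF a])
    fix y assume y: "y \<in> I - {r} \<union> K" "connected_in F' v y"
    show "y = a"
      using new_roots_separate[OF a(1) y(1) connected_trans[OF connected_sym[OF a(2)] y(2)]] by simp
  qed
qed

theorem detached_rooted_forest: "F' \<in> rooted_forests (I - {r} \<union> K) (J - K)"
  using detached_graph detached_acyclic detached_roots by (simp add: rooted_forests_iff)

end

lemma root_removal_bij:
  assumes disjoint: "I \<inter> J = {}" and root: "r \<in> I"
  shows "bij_betw (\<lambda>(K, F'). F' \<union> star_edges r K)
           (SIGMA K:Pow J. rooted_forests (I - {r} \<union> K) (J - K)) (rooted_forests I J)"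
proof (rule bij_betw_byWitness[where f' = "\<lambda>F. (root_children r F, delete_root r F)"])
  let ?pairs = "SIGMA K:Pow J. rooted_forests (I - {r} \<union> K) (J - K)"
  have attach: "root_attachment I J r K F'" if "(K, F') \<in> ?pairs" for K F'
    using that disjoint root by unfold_locales auto
  have detach: "root_detachment I J r F" if "F \<in> rooted_forests I J" for F
    using that disjoint root by unfold_locales
  show "\<forall>x\<in>?pairs. (\<lambda>F. (root_children r F, delete_root r F)) ((\<lambda>(K, F'). F' \<union> star_edges r K) x) = x"
  proof
    fix x assume x: "x \<in> ?pairs"
    obtain K F' where x_eq: "x = (K, F')" by (cases x)
    interpret root_attachment I J r K F' using attach x unfolding x_eq .
    have "root_children r F = K" "delete_root r F = F'"
      using root_children_attach[OF avoids_root] delete_root_attach[OF avoids_root]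
        children r_notin_J by auto
    then show "(\<lambda>F. (root_children r F, delete_root r F)) ((\<lambda>(K, F'). F' \<union> star_edges r K) x) = x"
      unfolding x_eq by simp
  qed
  show "\<forall>F\<in>rooted_forests I J.
          (\<lambda>(K, F'). F' \<union> star_edges r K) (root_children r F, delete_root r F) = F"
  proof
    fix F assume "F \<in> rooted_forests I J"
    then show "(\<lambda>(K, F'). F' \<union> star_edges r K) (root_children r F, delete_root r F) = F"
      using root_detachment.decomposition[OF detach] by simp
  qed
  show "(\<lambda>(K, F'). F' \<union> star_edges r K) ` ?pairs \<subseteq> rooted_forests I J"
  proof (rule image_subsetI)
    fix x assume "x \<in> ?pairs"
    then show "(\<lambda>(K, F'). F' \<union> star_edges r K) x \<in> rooted_forests I J"
      using root_attachment.attached_rooted_forest[OF attach] by (cases x) simp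
  qed
  show "(\<lambda>F. (root_children r F, delete_root r F)) ` rooted_forests I J \<subseteq> ?pairs"
  proof (rule image_subsetI)
    fix F assume "F \<in> rooted_forests I J"
    then show "(root_children r F, delete_root r F) \<in> ?pairs"
      using root_detachment.children_in_J[OF detach] root_detachment.detached_rooted_forest[OF detach]
      by simp
  qed
qed

lemma sum_rooted_forests_by_children:
  assumes disjoint: "I \<inter> J = {}" and root: "r \<in> I" and fin: "finite (I \<union> J)"
  shows "(\<Sum>F\<in>rooted_forests I J. g F) =
    (\<Sum>K\<in>Pow J. \<Sum>F'\<in>rooted_forests (I - {r} \<union> K) (J - K). g (F' \<union> star_edges r K))"
proof -
  have "finite (rooted_forests (I - {r} \<union> K) (J - K))" if "K \<subseteq> J" for K
    using that fin by (intro rooted_forests_finite) (auto elim: finite_subset[rotated])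
  then have "(\<Sum>K\<in>Pow J. \<Sum>F'\<in>rooted_forests (I - {r} \<union> K) (J - K). g (F' \<union> star_edges r K))
      = (\<Sum>(K, F')\<in>(SIGMA K:Pow J. rooted_forests (I - {r} \<union> K) (J - K)). g (F' \<union> star_edges r K))"
    using fin by (intro sum.Sigma) auto
  also have "\<dots> = (\<Sum>F\<in>rooted_forests I J. g F)"
    using sum.reindex_bij_betw[OF root_removal_bij[OF disjoint root], of g]
    by (simp add: case_prod_beta)
  finally show ?thesis by simp
qed

section \<open>Weights\<close>

lemma forest_weight_attach:
  assumes avoid: "\<forall>e\<in>F'. r \<notin> e" and graph: "is_graph_on V F'" and finV: "finite V"
    and rK: "r \<notin> K" and finK: "finite K"
    and sym: "\<And>k. k \<in> K \<Longrightarrow> \<zeta> r k = \<zeta> k r"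
  shows "forest_weight \<zeta> (F' \<union> star_edges r K) = forest_weight \<zeta> F' * (\<Prod>k\<in>K. cmod (\<zeta> k r))"
proof -
  define P where "P G = {(i, j). i < j \<and> {i, j} \<in> G}" for G :: "nat set set"
  define w where "w = (\<lambda>(i, j). cmod (\<zeta> i j))"
  define f where "f k = (min r k, max r k)" for k
  have finP: "finite (P F')"
  proof (rule finite_subset)
    show "P F' \<subseteq> V \<times> V" using graph_edge_vertices[OF graph] by (auto simp: P_def)
    show "finite (V \<times> V)" using finV by simp
  qed
  have minmax: "{min r k, max r k} = {r, k}" for k by (auto simp: min_def max_def)
  have star_pairs: "P (star_edges r K) = f ` K"
  proof
    show "P (star_edges r K) \<subseteq> f ` K"
    proof
      fix x assume "x \<in> P (star_edges r K)"
      then obtain i j k where x: "x = (i, j)" "i < j" "k \<in> K" "{i, j} = {r, k}"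
        by (auto simp: P_def)
      then have "x = f k" by (auto simp: f_def doubleton_eq_iff)
      then show "x \<in> f ` K" using x(3) by simp
    qed
    show "f ` K \<subseteq> P (star_edges r K)"
    proof
      fix x assume "x \<in> f ` K"
      then obtain k where k: "k \<in> K" "x = f k" by auto
      then have "r \<noteq> k" using rK by auto
      then show "x \<in> P (star_edges r K)"
        using k by (auto simp: P_def f_def min_def max_def insert_commute)
    qed
  qed
  have inj: "inj_on f K"
  proof (rule inj_onI)
    fix k1 k2 assume k: "k1 \<in> K" "k2 \<in> K" "f k1 = f k2"
    then have "{r, k1} = {r, k2}" using minmax[of k1] minmax[of k2] by (simp add: f_def)
    then show "k1 = k2" using rK k(1) by (auto simp: doubleton_eq_iff)
  qed
  have "forest_weight \<zeta> (F' \<union> star_edges r K) = prod w (P F' \<union> P (star_edges r K))"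
    unfolding forest_weight_def w_def P_def by (rule prod.cong) auto
  also have "\<dots> = prod w (P F') * prod w (P (star_edges r K))"
  proof (rule prod.union_disjoint)
    show "finite (P F')" "finite (P (star_edges r K))" using finP finK star_pairs by auto
    show "P F' \<inter> P (star_edges r K) = {}" using avoid by (auto simp: P_def)
  qed
  also have "prod w (P (star_edges r K)) = (\<Prod>k\<in>K. cmod (\<zeta> k r))"
    unfolding star_pairs prod.reindex[OF inj]
  proof (rule prod.cong)
    fix k assume "k \<in> K"
    then show "(w \<circ> f) k = cmod (\<zeta> k r)" using sym[of k] by (auto simp: w_def f_def min_def max_def)
  qed simp
  finally show ?thesis by (simp add: forest_weight_def P_def w_def)
qed

section \<open>The system of equations\<close>

lemma closed_form_step:
  assumes IJ: "I \<subseteq> {1..n}" "J \<subseteq> {1..n}" "I \<inter> J = {}" and root: "r \<in> I"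
    and sym: "\<And>i j. i \<in> {1..n} \<Longrightarrow> j \<in> {1..n} \<Longrightarrow> \<zeta> i j = \<zeta> j i"
  shows "(\<Prod>i\<in>I \<union> J. exp (2 * b i)) * (\<Sum>G\<in>rooted_forests I J. forest_weight \<zeta> G)
    = exp (2 * b r) * (\<Sum>K\<in>Pow J. (\<Prod>i\<in>K. cmod (\<zeta> i r)) *
        ((\<Prod>i\<in>(I - {r} \<union> K) \<union> (J - K). exp (2 * b i)) *
         (\<Sum>G\<in>rooted_forests (I - {r} \<union> K) (J - K). forest_weight \<zeta> G)))"
proof -
  let ?E = "\<lambda>X. \<Prod>i\<in>X. exp (2 * b i)"
  let ?W = "\<lambda>K. \<Sum>G\<in>rooted_forests (I - {r} \<union> K) (J - K). forest_weight \<zeta> G"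
  have fin: "finite (I \<union> J)" using IJ by (meson finite_Un finite_atLeastAtMost finite_subset)
  have rJ: "r \<notin> J" using IJ root by auto
  have vertices: "(I - {r} \<union> K) \<union> (J - K) = (I \<union> J) - {r}" if "K \<subseteq> J" for K
    using that rJ root by auto
  have star_factor: "(\<Sum>F'\<in>rooted_forests (I - {r} \<union> K) (J - K). forest_weight \<zeta> (F' \<union> star_edges r K))
      = (\<Prod>i\<in>K. cmod (\<zeta> i r)) * ?W K" if "K \<in> Pow J" for K
  proof -
    have K: "K \<subseteq> J" using that by simp
    have "forest_weight \<zeta> (F' \<union> star_edges r K) = forest_weight \<zeta> F' * (\<Prod>i\<in>K. cmod (\<zeta> i r))"
      if F': "F' \<in> rooted_forests (I - {r} \<union> K) (J - K)" for F'
    proof (rule forest_weight_attach)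
      interpret root_attachment I J r K F' using IJ root K F' by unfold_locales
      show "\<forall>e\<in>F'. r \<notin> e" by (rule avoids_root)
      show "is_graph_on ((I - {r} \<union> K) \<union> (J - K)) F'" using F' by (simp add: rooted_forests_iff)
      show "finite ((I - {r} \<union> K) \<union> (J - K))" using fin vertices[OF K] by simp
      show "r \<notin> K" "finite K" using K rJ fin by (auto elim: finite_subset)
      show "\<zeta> r k = \<zeta> k r" if "k \<in> K" for k using sym that K IJ root by blast
    qed
    then show ?thesis by (simp add: sum_distrib_left mult.commute)
  qed
  have "?E (I \<union> J) * (\<Sum>G\<in>rooted_forests I J. forest_weight \<zeta> G)
      = ?E (I \<union> J) * (\<Sum>K\<in>Pow J. (\<Prod>i\<in>K. cmod (\<zeta> i r)) * ?W K)"
    using sum_rooted_forests_by_children[OF IJ(3) root fin, of "forest_weight \<zeta>"] star_factor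
    by simp
  also have "\<dots> = exp (2 * b r) * (\<Sum>K\<in>Pow J. ?E ((I \<union> J) - {r}) * ((\<Prod>i\<in>K. cmod (\<zeta> i r)) * ?W K))"
    unfolding prod.remove[OF fin UnI1[OF root], of "\<lambda>i. exp (2 * b i)"] by (simp add: sum_distrib_left mult.assoc)
  also have "\<dots> = exp (2 * b r) * (\<Sum>K\<in>Pow J. (\<Prod>i\<in>K. cmod (\<zeta> i r)) *
        (?E ((I - {r} \<union> K) \<union> (J - K)) * ?W K))"
    by (intro arg_cong[where f="\<lambda>x. exp (2 * b r) * x"] sum.cong refl) (simp add: vertices mult_ac)
  finally show ?thesis .
qed

lemma closed_form_solves:
  assumes sym: "\<And>i j. i \<in> {1..n} \<Longrightarrow> j \<in> {1..n} \<Longrightarrow> \<zeta> i j = \<zeta> j i"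
    and choice: "\<And>I. I \<subseteq> {1..n} \<Longrightarrow> I \<noteq> {} \<Longrightarrow> \<iota> I \<in> I"
  shows "solves_system n b \<zeta> \<iota>
           (\<lambda>I J. (\<Prod>i\<in>I \<union> J. exp (2 * b i)) * (\<Sum>G\<in>rooted_forests I J. forest_weight \<zeta> G))"
  unfolding solves_system_def
proof (intro allI impI conjI)
  fix I J :: "nat set" assume IJ: "I \<subseteq> {1..n} \<and> J \<subseteq> {1..n} \<and> I \<inter> J = {}"
  show "(\<Prod>i\<in>{} \<union> J. exp (2 * b i)) * (\<Sum>G\<in>rooted_forests {} J. forest_weight \<zeta> G)
          = (if J = {} then 1 else 0)"
    by (simp add: rooted_forests_no_roots forest_weight_def)
  show "(\<Prod>i\<in>I \<union> J. exp (2 * b i)) * (\<Sum>G\<in>rooted_forests I J. forest_weight \<zeta> G) =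
        exp (2 * b (\<iota> I)) * (\<Sum>K\<in>Pow J. (\<Prod>i\<in>K. cmod (\<zeta> i (\<iota> I))) *
          ((\<Prod>i\<in>(I - {\<iota> I}) \<union> K \<union> (J - K). exp (2 * b i)) *
           (\<Sum>G\<in>rooted_forests ((I - {\<iota> I}) \<union> K) (J - K). forest_weight \<zeta> G)))"
    if "I \<noteq> {}"
    using closed_form_step[of I n J "\<iota> I" \<zeta> b] IJ choice[of I] that sym by blast
qed

text \<open>The system determines h on all disjoint pairs, as the recursion removes \<iota> I.\<close>
lemma solutions_unique:
  assumes h: "solves_system n b \<zeta> \<iota> h" and g: "solves_system n b \<zeta> \<iota> g"
    and choice: "\<And>I. I \<subseteq> {1..n} \<Longrightarrow> I \<noteq> {} \<Longrightarrow> \<iota> I \<in> I"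
    and IJ: "I \<subseteq> {1..n}" "J \<subseteq> {1..n}" "I \<inter> J = {}"
  shows "h I J = g I J"
  using IJ
proof (induction "card (I \<union> J)" arbitrary: I J rule: less_induct)
  case less
  show ?case
  proof (cases "I = {}")
    case True
    then have "h I J = (if J = {} then 1 else 0)" "g I J = (if J = {} then 1 else 0)"
      using h g less.prems unfolding solves_system_def by blast+
    then show ?thesis by simp
  next
    case False
    then have r: "\<iota> I \<in> I" using choice less.prems by blast
    have fin: "finite (I \<union> J)" using less.prems by (meson finite_Un finite_atLeastAtMost finite_subset)
    have "h ((I - {\<iota> I}) \<union> K) (J - K) = g ((I - {\<iota> I}) \<union> K) (J - K)" if K: "K \<subseteq> J" for K
    proof (rule less.hyps)
      have "(I - {\<iota> I} \<union> K) \<union> (J - K) = (I \<union> J) - {\<iota> I}" using K r less.prems by auto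
      then show "card ((I - {\<iota> I} \<union> K) \<union> (J - K)) < card (I \<union> J)"
        using card_Diff1_less[OF fin, of "\<iota> I"] r by simp
    qed (use less.prems K in auto)
    then show ?thesis using h g less.prems False by (simp add: solves_system_def)
  qed
qed

theorem mainTheorem7:
  fixes n :: nat and b :: "nat \<Rightarrow> real" and \<zeta> :: "nat \<Rightarrow> nat \<Rightarrow> complex"
    and \<iota> :: "nat set \<Rightarrow> nat"
  assumes "n \<ge> 1"
    and "\<And>i. i \<in> {1..n} \<Longrightarrow> b i \<ge> 0"
    and "\<And>i j. i \<in> {1..n} \<Longrightarrow> j \<in> {1..n} \<Longrightarrow> \<zeta> i j = \<zeta> j i"
    and "\<And>I. I \<subseteq> {1..n} \<Longrightarrow> I \<noteq> {} \<Longrightarrow> \<iota> I \<in> I"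
  shows "solves_system n b \<zeta> \<iota>
           (\<lambda>I J. (\<Prod>i\<in>I \<union> J. exp (2 * b i)) * (\<Sum>G\<in>rooted_forests I J. forest_weight \<zeta> G))
       \<and> (\<forall>h. solves_system n b \<zeta> \<iota> h \<longrightarrow>
             (\<forall>I J. I \<subseteq> {1..n} \<and> J \<subseteq> {1..n} \<and> I \<inter> J = {} \<longrightarrow>
                h I J = (\<Prod>i\<in>I \<union> J. exp (2 * b i)) *
                        (\<Sum>G\<in>rooted_forests I J. forest_weight \<zeta> G)))"
proof -
  have closed_form: "solves_system n b \<zeta> \<iota>
           (\<lambda>I J. (\<Prod>i\<in>I \<union> J. exp (2 * b i)) * (\<Sum>G\<in>rooted_forests I J. forest_weight \<zeta> G))"
    using closed_form_solves[OF assms(3,4)] .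
  show ?thesis
    using closed_form solutions_unique[OF _ closed_form assms(4)] by auto
qed

end
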